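(* Fix $p\in\{1,2\}$ and an integer $L\ge 1$. Let $N_0 = N_D+1$ and $\mathcal{D}_0=\mathcal{D}\subset\mathbb{R}^{N_D+1}$ be compact, and for $\ell=1,\dots,L$ let $\mathcal{D}_\ell\subset\mathbb{R}^{N_\ell}$ be compact and let $\mathbf{u}_\ell:\mathcal{D}_\ell\to\mathcal{D}_{\ell-1}$ be continuous and Lipschitz with constant $l_{\mathbf{u}_\ell}$. Define recursively $\mathbf{f}_0(\mathbf{x})=\mathbf{x}$ on $\mathcal{D}$ and $\mathbf{f}_\ell(\mathbf{x}_\ell) = \mathbf{f}_{\ell-1}(\mathbf{u}_\ell(\mathbf{x}_\ell))$ for $\mathbf{x}_\ell\in\mathcal{D}_\ell$, so $\mathbf{f}_\ell:\mathcal{D}_\ell\to\mathcal{D}$, and assume each $\mathbf{f}_\ell$ is Lipschitz with constant $l_{\mathbf{f}_\ell}$ with respect to $\|\cdot\|_p$, i.e. $\|\mathbf{f}_\ell(\mathbf{a})-\mathbf{f}_\ell(\mathbf{b})\|_p\le l_{\mathbf{f}_\ell}\|\mathbf{a}-\mathbf{b}\|_p$, with $l_{\mathbf{f}_0}=1$. Let $\hat{\mathbf{u}}_\ell:\mathcal{D}_\ell\to\mathcal{D}_{\ell-1}$ ($\ell=1,\dots,L$) be arbitrary approximations of $\mathbf{u}_\ell$, and define $\hat{\mathbf{f}}_0(\mathbf{x})=\mathbf{x}$ and $\hat{\mathbf{f}}_\ell(\mathbf{x}_\ell)=\hat{\mathbf{f}}_{\ell-1}(\hat{\mathbf{u}}_\ell(\mathbf{x}_\ell))$.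 For $1\le\ell\le L$ and $\mathbf{x}_\ell\in\mathcal{D}_\ell$, define the approximate intermediate points $\hat{\mathbf{x}}_\ell=\mathbf{x}_\ell$ and $\hat{\mathbf{x}}_{i-1}=\hat{\mathbf{u}}_i(\hat{\mathbf{x}}_i)$ for $i=\ell,\dots,1$, and the layer error vectors $\mathbf{e}_{u,i} = \mathbf{u}_i(\hat{\mathbf{x}}_i)-\hat{\mathbf{u}}_i(\hat{\mathbf{x}}_i)$. Let $\mathbf{e}_{f,\ell}=\mathbf{f}_\ell(\mathbf{x}_\ell)-\hat{\mathbf{f}}_\ell(\mathbf{x}_\ell)$ with components $e_{f,\ell,k}$. Then for every $1\le\ell\le L$, every $\mathbf{x}_\ell\in\mathcal{D}_\ell$ and every component $k$, $$|e_{f,\ell,k}| \le \sum_{i=1}^{\ell} \|\mathbf{e}_{u,i}\|_p\cdot l_{\mathbf{f}_{i-1}} .$$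
   Context: This models a deep network as a composition of layers/function blocks $\mathbf{u}_\ell$, each replaced by an approximation $\hat{\mathbf{u}}_\ell$ (a known layer has $\hat{\mathbf{u}}_\ell=\mathbf{u}_\ell$, hence zero error). The vector $\mathbf{x}\in\mathbb{R}^{N_D+1}$ uses the extended-vector (bias-absorbing) convention. *)

theory Defs
  imports "HOL-Analysis.Analysis"
begin

(* Vectors of R^n are represented as functions nat => real supported on {..<n}. *)

definition supported :: "nat \<Rightarrow> (nat \<Rightarrow> real) set" where
  "supported n = {x. \<forall>j\<ge>n. x j = 0}"

definition pnorm :: "real \<Rightarrow> nat \<Rightarrow> (nat \<Rightarrow> real) \<Rightarrow> real" where
  "pnorm p n x = (\<Sum>j<n. \<bar>x j\<bar> powr p) powr (1 / p)"

fun chain :: "(nat \<Rightarrow> (nat \<Rightarrow> real) \<Rightarrow> (nat \<Rightarrow> real)) \<Rightarrow> nat \<Rightarrow> (nat \<Rightarrow> real) \<Rightarrow> (nat \<Rightarrow> real)" where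
  "chain u 0 x = x"
| "chain u (Suc l) x = chain u l (u (Suc l) x)"

function xhat :: "(nat \<Rightarrow> (nat \<Rightarrow> real) \<Rightarrow> (nat \<Rightarrow> real)) \<Rightarrow> nat \<Rightarrow> nat \<Rightarrow> (nat \<Rightarrow> real) \<Rightarrow> (nat \<Rightarrow> real)" where
  "xhat uh l i x = (if l \<le> i then x else uh (Suc i) (xhat uh l (Suc i) x))"
  by pat_completeness auto
termination by (relation "Wellfounded.measure (\<lambda>(uh, l, i, x). l - i)") auto

end

theory Submission
  imports Defs
begin

text \<open>The error of the composed approximation telescopes layer by layer:
  \<open>f_l x - fh_l x = (f_(l-1) (u_l x) - f_(l-1) (uh_l x)) + (f_(l-1) - fh_(l-1)) (uh_l x)\<close>.
  The first difference is at most the Lipschitz constant of \<open>f_(l-1)\<close> times the local error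
  of layer \<open>l\<close> at the approximate point \<open>x\<close>; the second is the same problem one layer
  down, started at \<open>uh_l x\<close>, so induction on \<open>l\<close> sums the local contributions.
  The restriction \<open>p \<in> {1, 2}\<close> only enters through \<open>|v k| \<le> pnorm p n v\<close>, which holds for
  every \<open>p > 0\<close>.\<close>

declare xhat.simps [simp del]

lemma abs_le_pnorm:
  fixes v :: "nat \<Rightarrow> real"
  assumes "p > 0" and "k < n"
  shows "\<bar>v k\<bar> \<le> pnorm p n v"
proof -
  have "\<bar>v k\<bar> powr p \<le> (\<Sum>j<n. \<bar>v j\<bar> powr p)"
    using assms(2) by (intro member_le_sum) auto
  then have "(\<bar>v k\<bar> powr p) powr (1 / p) \<le> (\<Sum>j<n. \<bar>v j\<bar> powr p) powr (1 / p)"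
    using assms(1) by (intro powr_mono2) auto
  moreover have "(\<bar>v k\<bar> powr p) powr (1 / p) = \<bar>v k\<bar>"
    using assms(1) by (simp add: powr_powr)
  ultimately show ?thesis
    by (simp add: pnorm_def)
qed

lemma xhat_self [simp]: "xhat uh l l x = x"
  by (simp add: xhat.simps)

lemma xhat_Suc:
  assumes "i \<le> l"
  shows "xhat uh (Suc l) i x = xhat uh l i (uh (Suc l) x)"
  using assms
proof (induction i rule: inc_induct)
  case base
  show ?case by (subst xhat.simps) simp
next
  case (step i)
  then show ?case by (subst (1 2) xhat.simps) simp
qed

lemma chain_error_le_sum:
  fixes u uh :: "nat \<Rightarrow> (nat \<Rightarrow> real) \<Rightarrow> (nat \<Rightarrow> real)"
  assumes u_maps: "\<And>i. 1 \<le> i \<Longrightarrow> i \<le> L \<Longrightarrow> u i ` D i \<subseteq> D (i - 1)"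
    and uh_maps: "\<And>i. 1 \<le> i \<Longrightarrow> i \<le> L \<Longrightarrow> uh i ` D i \<subseteq> D (i - 1)"
    and chain_lip: "\<And>i a b. i \<le> L \<Longrightarrow> a \<in> D i \<Longrightarrow> b \<in> D i \<Longrightarrow>
        \<bar>chain u i a k - chain u i b k\<bar> \<le> lf i * pnorm p (N i) (a - b)"
    and "l \<le> L" and "x \<in> D l"
  shows "\<bar>chain u l x k - chain uh l x k\<bar>
    \<le> (\<Sum>i=1..l. pnorm p (N (i - 1)) (u i (xhat uh l i x) - uh i (xhat uh l i x)) * lf (i - 1))"
  using assms(4,5)
proof (induction l arbitrary: x)
  case 0
  then show ?case by simp
next
  case (Suc l)
  define y where "y = uh (Suc l) x"
  have y: "y \<in> D l" and ux: "u (Suc l) x \<in> D l"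
    using uh_maps[of "Suc l"] u_maps[of "Suc l"] Suc.prems by (auto simp: y_def)
  have layer: "\<bar>chain u l (u (Suc l) x) k - chain u l y k\<bar>
      \<le> pnorm p (N l) (u (Suc l) x - uh (Suc l) x) * lf l"
    using chain_lip[OF _ ux y] Suc.prems by (simp add: y_def mult.commute)
  have "\<bar>chain u l y k - chain uh l y k\<bar>
      \<le> (\<Sum>i=1..l. pnorm p (N (i - 1)) (u i (xhat uh l i y) - uh i (xhat uh l i y)) * lf (i - 1))"
    using Suc.IH y Suc.prems by (meson Suc_leD)
  also have "\<dots> = (\<Sum>i=1..l. pnorm p (N (i - 1))
            (u i (xhat uh (Suc l) i x) - uh i (xhat uh (Suc l) i x)) * lf (i - 1))"
    by (intro sum.cong) (simp_all add: xhat_Suc y_def)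
  finally have below: "\<bar>chain u l y k - chain uh l y k\<bar>
      \<le> (\<Sum>i=1..l. pnorm p (N (i - 1))
            (u i (xhat uh (Suc l) i x) - uh i (xhat uh (Suc l) i x)) * lf (i - 1))" .
  have "\<bar>chain u (Suc l) x k - chain uh (Suc l) x k\<bar>
      \<le> \<bar>chain u l (u (Suc l) x) k - chain u l y k\<bar> + \<bar>chain u l y k - chain uh l y k\<bar>"
    by (simp add: y_def)
  also have "\<dots> \<le> (\<Sum>i=1..Suc l. pnorm p (N (i - 1))
            (u i (xhat uh (Suc l) i x) - uh i (xhat uh (Suc l) i x)) * lf (i - 1))"
    using layer below by simp
  finally show ?case .
qed

theorem theorem4:
  fixes p :: real and L ND :: nat and N :: "nat \<Rightarrow> nat"
    and D :: "nat \<Rightarrow> (nat \<Rightarrow> real) set"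
    and u uh :: "nat \<Rightarrow> (nat \<Rightarrow> real) \<Rightarrow> (nat \<Rightarrow> real)"
    and lu lf :: "nat \<Rightarrow> real"
  assumes p: "p = 1 \<or> p = 2"
    and L: "L \<ge> 1"
    and N0: "N 0 = ND + 1"
    and D_supp: "\<And>l. l \<le> L \<Longrightarrow> D l \<subseteq> supported (N l)"
    and D_compact: "\<And>l. l \<le> L \<Longrightarrow> compact (D l)"
    and u_maps: "\<And>l. 1 \<le> l \<Longrightarrow> l \<le> L \<Longrightarrow> u l ` D l \<subseteq> D (l - 1)"
    and u_cont: "\<And>l. 1 \<le> l \<Longrightarrow> l \<le> L \<Longrightarrow> continuous_on (D l) (u l)"
    and u_lip: "\<And>l a b. 1 \<le> l \<Longrightarrow> l \<le> L \<Longrightarrow> a \<in> D l \<Longrightarrow> b \<in> D l \<Longrightarrow>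
        pnorm p (N (l - 1)) (u l a - u l b) \<le> lu l * pnorm p (N l) (a - b)"
    and f_lip: "\<And>l a b. l \<le> L \<Longrightarrow> a \<in> D l \<Longrightarrow> b \<in> D l \<Longrightarrow>
        pnorm p (N 0) (chain u l a - chain u l b) \<le> lf l * pnorm p (N l) (a - b)"
    and lf0: "lf 0 = 1"
    and uh_maps: "\<And>l. 1 \<le> l \<Longrightarrow> l \<le> L \<Longrightarrow> uh l ` D l \<subseteq> D (l - 1)"
  shows "\<forall>l x k. 1 \<le> l \<and> l \<le> L \<and> x \<in> D l \<and> k < N 0 \<longrightarrow>
      \<bar>chain u l x k - chain uh l x k\<bar>
        \<le> (\<Sum>i=1..l. pnorm p (N (i - 1))
               (u i (xhat uh l i x) - uh i (xhat uh l i x)) * lf (i - 1))"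
proof (intro allI impI)
  fix l x k
  assume lxk: "1 \<le> l \<and> l \<le> L \<and> x \<in> D l \<and> k < N 0"
  have "p > 0" using p by auto
  have chain_lip: "\<bar>chain u i a k - chain u i b k\<bar> \<le> lf i * pnorm p (N i) (a - b)"
    if "i \<le> L" "a \<in> D i" "b \<in> D i" for i a b
    using abs_le_pnorm[OF \<open>p > 0\<close>, of k "N 0" "chain u i a - chain u i b"] f_lip[OF that] lxk
    by simp
  show "\<bar>chain u l x k - chain uh l x k\<bar>
      \<le> (\<Sum>i=1..l. pnorm p (N (i - 1)) (u i (xhat uh l i x) - uh i (xhat uh l i x)) * lf (i - 1))"
    using chain_error_le_sum[OF u_maps uh_maps chain_lip] lxk by blast
qed

end
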